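(* Let $W:\mathbb{N}^\star\times\mathbb{N}^\star\to\mathbb{C}$ be such that $F\,\square_W\,G\in\mathbb{M}$ and $F\,\square_W\,G=G\,\square_W\,F$ for all $F,G\in\mathbb{M}$. Then there exists $E\in\mathbb{M}$ with $F\,\square_W\,E=E\,\square_W\,F=F$ for all $F\in\mathbb{M}$ if and only if $W(1,p^n)=1$ for every prime $p$ and every integer $n\ge0$; in that case $E=\delta_1$.
   Context: $\mathbb{M}$ is the set of functions $F:\mathbb{N}^\star\to\mathbb{C}$ with $F(1)=1$ and $F(ab)=F(a)F(b)$ whenever $\gcd(a,b)=1$. For a weight $W$, $(F\,\square_W\,G)(m)=\sum_{ab=m}F(a)G(b)W(a,b)$. $\delta_1$ is the function with $\delta_1(1)=1$ and $\delta_1(n)=0$ for $n\ge2$. *)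

theory Defs
  imports "HOL-Computational_Algebra.Primes" Complex_Main
begin

text \<open>Functions on the positive integers are modelled as nat \<Rightarrow> complex;
  the value at 0 is irrelevant and never constrained.\<close>

definition multM :: "(nat \<Rightarrow> complex) set" where
  "multM = {F. F 1 = 1 \<and>
     (\<forall>a b. a > 0 \<longrightarrow> b > 0 \<longrightarrow> coprime a b \<longrightarrow> F (a * b) = F a * F b)}"

definition wconv :: "(nat \<Rightarrow> nat \<Rightarrow> complex) \<Rightarrow> (nat \<Rightarrow> complex) \<Rightarrow> (nat \<Rightarrow> complex) \<Rightarrow> nat \<Rightarrow> complex" where
  "wconv W F G m = (if m = 0 then 0 else
     (\<Sum>a\<in>{a. a dvd m}. F a * G (m div a) * W a (m div a)))"

definition delta1 :: "nat \<Rightarrow> complex" where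
  "delta1 n = (if n = 1 then 1 else 0)"

end

theory Submission
  imports Defs
begin

text \<open>If \<open>E\<close> is a two-sided identity, testing it against the multiplicative functions that
  equal \<open>\<delta>\<^sub>1\<close> except for the value \<open>t\<close> at a prime power \<open>q\<close> (the only divisors of \<open>q\<close> that
  matter are \<open>1\<close> and \<open>q\<close>) gives \<open>E q W(q,1) + t W(1,q) = t\<close> and \<open>E q W(1,q) + t W(q,1) = t\<close>;
  the cases \<open>t = 0, 1\<close> force \<open>W(1,q) = 1\<close> and \<open>E q = 0\<close>, so \<open>E = \<delta>\<^sub>1\<close>.
  Conversely \<open>(\<delta>\<^sub>1 \<box>\<^sub>W 1)(m) = W(1,m)\<close> is multiplicative by closure, hence identically \<open>1\<close>
  once it is \<open>1\<close> on prime powers; commutativity then gives \<open>W(m,1) = W(1,m) = 1\<close>, which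
  makes \<open>\<delta>\<^sub>1\<close> a two-sided identity.\<close>

definition is_wconv_identity :: "(nat \<Rightarrow> nat \<Rightarrow> complex) \<Rightarrow> (nat \<Rightarrow> complex) \<Rightarrow> bool" where
  "is_wconv_identity W E \<longleftrightarrow>
     (\<forall>F\<in>multM. \<forall>m>0. wconv W F E m = F m \<and> wconv W E F m = F m)"

lemma is_wconv_identityD:
  "is_wconv_identity W E \<Longrightarrow> F \<in> multM \<Longrightarrow> m > 0 \<Longrightarrow>
     wconv W F E m = F m \<and> wconv W E F m = F m"
  by (simp add: is_wconv_identity_def)

lemma multM_one: "F \<in> multM \<Longrightarrow> F 1 = 1"
  by (simp add: multM_def)

lemma multM_mult:
  "F \<in> multM \<Longrightarrow> a > 0 \<Longrightarrow> b > 0 \<Longrightarrow> coprime a b \<Longrightarrow> F (a * b) = F a * F b"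
  by (simp add: multM_def)

lemma delta1_multM: "delta1 \<in> multM"
  by (auto simp: multM_def delta1_def)

lemma const_one_multM: "(\<lambda>_. 1) \<in> multM"
  by (simp add: multM_def)

lemma prime_power_gt_1: "prime (p :: nat) \<Longrightarrow> k \<ge> 1 \<Longrightarrow> p ^ k > 1"
  by (intro one_less_power prime_gt_1_nat) auto

lemma coprime_factors_of_prime_power:
  fixes a b p :: nat
  assumes "prime p" "a * b = p ^ k" "coprime a b"
  shows "a = 1 \<or> b = 1"
proof -
  obtain i j where ij: "a = p ^ i" "b = p ^ j"
    using prime_power_mult_nat[OF assms(1,2)] by blast
  have "i = 0 \<or> j = 0"
    using assms(1,3) ij by (metis coprime_common_divisor dvd_power not_gr0 not_prime_unit)
  then show ?thesis using ij by auto
qed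

lemma delta1_update_multM:
  assumes p: "prime p" and k: "k \<ge> 1"
  shows "delta1(p ^ k := t) \<in> multM"
  unfolding multM_def
proof safe
  let ?f = "delta1(p ^ k := t)"
  have ne: "1 \<noteq> p ^ k" using prime_power_gt_1[OF p k] by linarith
  show f1: "?f 1 = 1" unfolding fun_upd_other[OF ne] by (simp add: delta1_def)
  fix a b :: nat assume "a > 0" "b > 0" and ab: "coprime a b"
  show "?f (a * b) = ?f a * ?f b"
  proof (cases "a = 1 \<or> b = 1")
    case True
    then show ?thesis by (elim disjE) (simp_all only: mult_1_left mult_1_right f1)
  next
    case False
    then have "a * b \<noteq> p ^ k" using coprime_factors_of_prime_power[OF p _ ab] by blast
    moreover have "a \<noteq> p ^ k \<or> b \<noteq> p ^ k" using False ab by auto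
    ultimately show ?thesis using False \<open>a > 0\<close> \<open>b > 0\<close> by (auto simp: delta1_def)
  qed
qed

lemma prime_power_coprime_factor:
  fixes m :: nat
  assumes "m > 1"
  obtains p k r where "prime p" "k \<ge> 1" "0 < r" "r < m" "coprime (p ^ k) r" "m = p ^ k * r"
proof -
  obtain p where p: "prime p" "p dvd m"
    using prime_factor_nat[of m] assms by auto
  define k where "k = multiplicity p m"
  define r where "r = m div p ^ k"
  have m: "m = p ^ k * r"
    unfolding k_def r_def by (simp add: multiplicity_dvd)
  have ndvd: "\<not> p dvd r"
    unfolding k_def r_def using assms p(1) by (intro multiplicity_decompose) auto
  have k: "k \<ge> 1"
    unfolding k_def using p assms by (simp add: Suc_le_eq prime_multiplicity_gt_zero_iff)
  have "0 < r" using ndvd by (intro gr0I) simp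
  have "1 * r < p ^ k * r"
    using prime_power_gt_1[OF p(1) k] \<open>0 < r\<close> by (rule mult_strict_right_mono)
  then have "r < m" using m by simp
  moreover have "coprime (p ^ k) r"
    using ndvd p(1) by (simp add: prime_imp_coprime)
  ultimately show ?thesis using that p(1) k \<open>0 < r\<close> m by blast
qed

lemma multM_eqI:
  assumes F: "F \<in> multM" and G: "G \<in> multM"
    and prime_power: "\<And>p k. prime p \<Longrightarrow> k \<ge> 1 \<Longrightarrow> F (p ^ k) = G (p ^ k)"
  shows "m > 0 \<Longrightarrow> F m = G m"
proof (induction m rule: less_induct)
  case (less m)
  show ?case
  proof (cases "m = 1")
    case True
    then show ?thesis using multM_one[OF F] multM_one[OF G] by simp
  next
    case False
    then obtain p k r where pkr: "prime p" "k \<ge> 1" "0 < r" "r < m" "coprime (p ^ k) r"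
      and m: "m = p ^ k * r"
      using prime_power_coprime_factor less.prems by (metis less_one nat_neq_iff)
    have "p ^ k > 0" using pkr(1) by (simp add: prime_gt_0_nat)
    then show ?thesis
      using m pkr less.IH[of r] prime_power multM_mult[OF F] multM_mult[OF G] by simp
  qed
qed

lemma sum_divisors_single_support:
  fixes f :: "nat \<Rightarrow> 'a :: comm_monoid_add"
  assumes "m > 0" "c dvd m" "\<And>a. a dvd m \<Longrightarrow> a \<noteq> c \<Longrightarrow> f a = 0"
  shows "(\<Sum>a\<in>{a. a dvd m}. f a) = f c"
proof -
  have "(\<Sum>a\<in>{a. a dvd m}. f a) = (\<Sum>a\<in>{c}. f a)"
    by (rule sum.mono_neutral_right) (use assms in auto)
  then show ?thesis by simp
qed

lemma sum_divisors_two_support: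
  fixes f :: "nat \<Rightarrow> 'a :: comm_monoid_add"
  assumes "m > 1" "\<And>a. a dvd m \<Longrightarrow> a \<noteq> 1 \<Longrightarrow> a \<noteq> m \<Longrightarrow> f a = 0"
  shows "(\<Sum>a\<in>{a. a dvd m}. f a) = f 1 + f m"
proof -
  have "(\<Sum>a\<in>{a. a dvd m}. f a) = (\<Sum>a\<in>{1, m}. f a)"
    by (rule sum.mono_neutral_right) (use assms in auto)
  then show ?thesis using assms(1) by simp
qed

lemma div_eq_one_divisor:
  fixes a m :: nat
  assumes "m > 0" "a dvd m"
  shows "m div a = 1 \<longleftrightarrow> a = m"
  using assms by (auto elim: dvdE)

lemma wconv_one: "wconv W F G 1 = F 1 * G 1 * W 1 1"
  by (simp add: wconv_def)

lemma wconv_delta1_left: "m > 0 \<Longrightarrow> wconv W delta1 F m = F m * W 1 m"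
  unfolding wconv_def by (subst sum_divisors_single_support[of m 1]) (auto simp: delta1_def)

lemma wconv_delta1_right: "m > 0 \<Longrightarrow> wconv W F delta1 m = F m * W m 1"
  unfolding wconv_def
  by (subst sum_divisors_single_support[of m m]) (auto simp: delta1_def div_eq_one_divisor)

lemma wconv_delta1_update_left:
  assumes "q > 1"
  shows "wconv W (delta1(q := t)) G q = G q * W 1 q + t * G 1 * W q 1"
  unfolding wconv_def using assms
  by (subst sum_divisors_two_support) (auto simp: delta1_def)

lemma wconv_delta1_update_right:
  assumes "q > 1"
  shows "wconv W G (delta1(q := t)) q = G q * W q 1 + t * G 1 * W 1 q"
proof -
  have "q div a \<noteq> 1" "q div a \<noteq> q" if "a dvd q" "a \<noteq> 1" "a \<noteq> q" for a
    using that assms by auto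
  then show ?thesis
    unfolding wconv_def using assms
    by (subst sum_divisors_two_support) (auto simp: delta1_def)
qed

lemma wconv_identity_W_one_one:
  assumes "E \<in> multM" "is_wconv_identity W E"
  shows "W 1 1 = 1"
  using is_wconv_identityD[OF assms(2,1), of 1] wconv_one[of W E E] multM_one[OF assms(1)] by simp

lemma wconv_identity_prime_power:
  assumes E: "E \<in> multM" "is_wconv_identity W E" and p: "prime p" and k: "k \<ge> 1"
  shows "W 1 (p ^ k) = 1" and "E (p ^ k) = 0"
proof -
  let ?q = "p ^ k"
  have q: "?q > 1" using prime_power_gt_1[OF p k] .
  have test: "wconv W (delta1(?q := t)) E ?q = t \<and> wconv W E (delta1(?q := t)) ?q = t" for t
    using is_wconv_identityD[OF E(2) delta1_update_multM[OF p k], of ?q] prime_gt_0_nat[OF p]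
    by simp
  have right: "E ?q * W ?q 1 + t * W 1 ?q = t" for t
    using test[THEN conjunct2] wconv_delta1_update_right[OF q, of W E t] multM_one[OF E(1)] by simp
  have left: "E ?q * W 1 ?q + t * W ?q 1 = t" for t
    using test[THEN conjunct1] wconv_delta1_update_left[OF q, of W t E] multM_one[OF E(1)] by simp
  show W1q: "W 1 ?q = 1" using right[of 0] right[of 1] by (simp del: mult_eq_0_iff)
  show "E ?q = 0" using left[of 0] W1q by simp
qed

lemma wconv_identity_eq_delta1:
  assumes E: "E \<in> multM" "is_wconv_identity W E" and "m > 0"
  shows "E m = delta1 m"
proof (rule multM_eqI[OF E(1) delta1_multM _ \<open>m > 0\<close>])
  fix p k :: nat assume p: "prime p" and k: "k \<ge> 1"
  have "p ^ k \<noteq> 1" using prime_power_gt_1[OF p k] by linarith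
  then show "E (p ^ k) = delta1 (p ^ k)"
    using wconv_identity_prime_power(2)[OF E p k] by (simp add: delta1_def)
qed

lemma W_one_eq_one:
  assumes closed: "wconv W delta1 (\<lambda>_. 1) \<in> multM"
    and prime_power: "\<And>p n. prime p \<Longrightarrow> W 1 (p ^ n) = 1" and "m > 0"
  shows "W 1 m = 1"
proof -
  have "wconv W delta1 (\<lambda>_. 1) m = 1"
  proof (rule multM_eqI[OF closed const_one_multM _ \<open>m > 0\<close>])
    fix p k :: nat assume "prime p"
    then show "wconv W delta1 (\<lambda>_. 1) (p ^ k) = 1"
      using prime_power wconv_delta1_left by (simp add: prime_gt_0_nat)
  qed
  then show ?thesis using wconv_delta1_left[OF \<open>m > 0\<close>] by simp
qed

lemma delta1_is_wconv_identity:
  assumes closed: "wconv W delta1 (\<lambda>_. 1) \<in> multM"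
    and comm: "\<And>m. m > 0 \<Longrightarrow> wconv W delta1 (\<lambda>_. 1) m = wconv W (\<lambda>_. 1) delta1 m"
    and prime_power: "\<And>p n. prime p \<Longrightarrow> W 1 (p ^ n) = 1"
  shows "is_wconv_identity W delta1"
proof -
  have W1: "W 1 m = 1" if "m > 0" for m
    using W_one_eq_one[OF closed prime_power that] .
  have W2: "W m 1 = 1" if "m > 0" for m
    using comm[OF that] W1[OF that] wconv_delta1_left[OF that] wconv_delta1_right[OF that] by simp
  show ?thesis
    using W1 W2 by (simp add: is_wconv_identity_def wconv_delta1_left wconv_delta1_right)
qed

theorem mainTheorem6:
  fixes W :: "nat \<Rightarrow> nat \<Rightarrow> complex"
  assumes closed: "\<forall>F G. F \<in> multM \<longrightarrow> G \<in> multM \<longrightarrow> wconv W F G \<in> multM"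
    and comm: "\<forall>F G. F \<in> multM \<longrightarrow> G \<in> multM \<longrightarrow>
                 (\<forall>m>0. wconv W F G m = wconv W G F m)"
  shows "((\<exists>E\<in>multM. \<forall>F\<in>multM. \<forall>m>0. wconv W F E m = F m \<and> wconv W E F m = F m)
            \<longleftrightarrow> (\<forall>(p::nat) n. prime p \<longrightarrow> W 1 (p ^ n) = 1))
         \<and> (\<forall>E\<in>multM. (\<forall>F\<in>multM. \<forall>m>0. wconv W F E m = F m \<and> wconv W E F m = F m)
              \<longrightarrow> (\<forall>m>0. E m = delta1 m))"
  unfolding is_wconv_identity_def[symmetric]
proof (intro conjI iffI ballI impI allI)
  fix p n :: nat
  assume "\<exists>E\<in>multM. is_wconv_identity W E" and p: "prime p"
  then obtain E where E: "E \<in> multM" "is_wconv_identity W E" by blast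
  show "W 1 (p ^ n) = 1"
    using wconv_identity_W_one_one[OF E] wconv_identity_prime_power(1)[OF E p]
    by (cases "n = 0") auto
next
  assume "\<forall>p n. prime p \<longrightarrow> W 1 (p ^ n) = 1"
  then have "is_wconv_identity W delta1"
    using closed comm delta1_multM const_one_multM by (intro delta1_is_wconv_identity) auto
  then show "\<exists>E\<in>multM. is_wconv_identity W E" using delta1_multM by blast
qed (rule wconv_identity_eq_delta1)

end
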